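(* Let $\ell,m$ be integers with $1\le\ell<m$ and let $I=\{\ell,m\}$. Then every complex root of $d(I;z)$ lies in the union of the discs $\mathcal D_k=\{z\in\mathbb C\mid |z-k|\le m\}$ for $k=0,1,\dots,m-1$.
   Context: $d(I;z)$ is the descent polynomial: the unique polynomial whose value at each integer $n>\max(I\cup\{0\})$ is the number of permutations $\pi\in\mathfrak S_n$ with $\{j\mid\pi_j>\pi_{j+1}\}=I$, evaluated at complex $z$. *)

theory Defs
  imports "HOL-Analysis.Analysis" "HOL-Combinatorics.Permutations"
          "HOL-Computational_Algebra.Polynomial"
begin

definition descent_set :: "nat \<Rightarrow> (nat \<Rightarrow> nat) \<Rightarrow> nat set" where
  "descent_set n \<pi> = {j. 1 \<le> j \<and> j < n \<and> \<pi> j > \<pi> (Suc j)}"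

definition descent_count :: "nat set \<Rightarrow> nat \<Rightarrow> nat" where
  "descent_count I n = card {\<pi>. \<pi> permutes {1..n} \<and> descent_set n \<pi> = I}"

definition descent_poly :: "nat set \<Rightarrow> complex poly" where
  "descent_poly I = (THE p. \<forall>n. n > Max (I \<union> {0}) \<longrightarrow>
        poly p (of_nat n) = of_nat (descent_count I n))"

end

theory Submission
  imports Defs
begin

(*
  Permutations of {1..n} whose descents lie in {a, b} (a \<le> b \<le> n) are determined by the value
  sets of their three increasing runs, so there are C(n,a) C(n-a,b-a) of them. Inclusion-exclusion over
  the descent sets {l,m}, {l}, {m} and {} then gives, for 1 \<le> l < m \<le> n,
    d({l,m}; n) = (C(m,l) - 1) C(n,m) - C(n,l) + 1,
  i.e. d({l,m}; z) = (C(m,l) - 1) Q_m(z) - Q_l(z) + 1 with Q_k(z) = z gchoose k = \<Prod>i<k. (z - i)/(i + 1).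
  If |z - i| > m for all i < m, every factor of Q_m has modulus > 1, so |Q_l| > 1 and |Q_m| > |Q_l|;
  since C(m,l) \<ge> 3 for m \<ge> 3, this gives |(C(m,l) - 1) Q_m| \<ge> 2 |Q_m| > |Q_l| + 1 \<ge> |Q_l - 1|,
  so z is not a root. For m = 2 the roots are 1 and 2.
*)

definition perm_of_list :: "nat list \<Rightarrow> nat \<Rightarrow> nat" where
  "perm_of_list xs j = (if 1 \<le> j \<and> j \<le> length xs then xs ! (j - 1) else j)"

lemma map_perm_of_list: "map (perm_of_list xs) [1..<Suc (length xs)] = xs"
  by (rule map_upt_eqI) (auto simp: perm_of_list_def)

lemma perm_of_list_map:
  assumes "\<pi> permutes {1..n}"
  shows "perm_of_list (map \<pi> [1..<Suc n]) = \<pi>"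
proof
  fix j
  show "perm_of_list (map \<pi> [1..<Suc n]) j = \<pi> j"
    using permutes_not_in[OF assms, of j] by (auto simp: perm_of_list_def simp del: upt_Suc)
qed

lemma perm_of_list_permutes:
  assumes "distinct xs" and "set xs = {1..length xs}"
  shows "perm_of_list xs permutes {1..length xs}"
proof (rule bij_imp_permutes)
  let ?n = "length xs"
  have "distinct (map (perm_of_list xs) [1..<Suc ?n])" "set (map (perm_of_list xs) [1..<Suc ?n]) = {1..?n}"
    using assms by (simp_all only: map_perm_of_list)
  then show "bij_betw (perm_of_list xs) {1..?n} {1..?n}"
    by (simp del: upt_Suc add: bij_betw_def distinct_map atLeastLessThanSuc_atLeastAtMost)
qed (auto simp: perm_of_list_def)

lemma map_upt_Suc_block:
  assumes "j \<le> n"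
  shows "map f [Suc i..<Suc j] = drop i (take j (map f [1..<Suc n]))"
  using assms by (simp del: upt_Suc add: take_map drop_map)

lemma image_perm_of_list:
  assumes "j \<le> length xs"
  shows "perm_of_list xs ` {Suc i..j} = set (drop i (take j xs))"
proof -
  have "perm_of_list xs ` {Suc i..j} = set (map (perm_of_list xs) [Suc i..<Suc j])"
    by (simp del: upt_Suc add: atLeastLessThanSuc_atLeastAtMost)
  also have "\<dots> = set (drop i (take j xs))"
    using map_upt_Suc_block[OF assms, of "perm_of_list xs" i] by (simp only: map_perm_of_list)
  finally show ?thesis .
qed

lemma sorted_map_upt_iff:
  "sorted (map f [i..<j]) \<longleftrightarrow> (\<forall>k. i \<le> k \<longrightarrow> Suc k < j \<longrightarrow> f k \<le> f (Suc k))"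
proof -
  have "sorted (map f [i..<j]) \<longleftrightarrow> (\<forall>t. Suc t < j - i \<longrightarrow> f (i + t) \<le> f (Suc (i + t)))"
    by (simp add: sorted_iff_nth_Suc)
  also have "\<dots> \<longleftrightarrow> (\<forall>k. i \<le> k \<longrightarrow> Suc k < j \<longrightarrow> f k \<le> f (Suc k))"
  proof (intro iffI allI impI)
    fix k assume "\<forall>t. Suc t < j - i \<longrightarrow> f (i + t) \<le> f (Suc (i + t))" "i \<le> k" "Suc k < j"
    moreover have "Suc (k - i) < j - i" using \<open>i \<le> k\<close> \<open>Suc k < j\<close> by linarith
    ultimately have "f (i + (k - i)) \<le> f (Suc (i + (k - i)))" by blast
    then show "f k \<le> f (Suc k)" using \<open>i \<le> k\<close> by simp
  qed simp
  finally show ?thesis .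
qed

lemma sorted_list_of_set_set_id: "sorted xs \<Longrightarrow> distinct xs \<Longrightarrow> sorted_list_of_set (set xs) = xs"
  by (simp add: sorted_list_of_set_sort_remdups distinct_remdups_id sorted_sort_id)

definition disjoint_subset_pairs :: "'a set \<Rightarrow> nat \<Rightarrow> nat \<Rightarrow> ('a set \<times> 'a set) set" where
  "disjoint_subset_pairs S a c = {(A, B). A \<subseteq> S \<and> card A = a \<and> B \<subseteq> S - A \<and> card B = c}"

lemma card_disjoint_subset_pairs:
  assumes "finite S"
  shows "card (disjoint_subset_pairs S a c) = (card S choose a) * ((card S - a) choose c)"
proof -
  have "disjoint_subset_pairs S a c = Sigma {A. A \<subseteq> S \<and> card A = a} (\<lambda>A. {B. B \<subseteq> S - A \<and> card B = c})"
    by (auto simp: disjoint_subset_pairs_def)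
  also have "card \<dots> = (\<Sum>A | A \<subseteq> S \<and> card A = a. card {B. B \<subseteq> S - A \<and> card B = c})"
    using assms by (intro card_SigmaI) (auto intro: finite_subset[of _ "Pow S"])
  also have "\<dots> = (\<Sum>A | A \<subseteq> S \<and> card A = a. (card S - a) choose c)"
  proof (rule sum.cong)
    fix A assume "A \<in> {A. A \<subseteq> S \<and> card A = a}"
    then have "card (S - A) = card S - a"
      using assms by (auto simp: card_Diff_subset finite_subset)
    then show "card {B. B \<subseteq> S - A \<and> card B = c} = (card S - a) choose c"
      using n_subsets[of "S - A" c] assms by simp
  qed simp
  also have "\<dots> = (card S choose a) * ((card S - a) choose c)"
    using n_subsets[OF assms, of a] by simp
  finally show ?thesis .
qed

definition perms_descents_in :: "nat \<Rightarrow> nat set \<Rightarrow> (nat \<Rightarrow> nat) set" where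
  "perms_descents_in n S = {\<pi>. \<pi> permutes {1..n} \<and> descent_set n \<pi> \<subseteq> S}"

lemma descent_set_subset_pair_iff:
  assumes "a \<le> b" "b \<le> n"
  shows "descent_set n \<pi> \<subseteq> {a, b} \<longleftrightarrow>
    sorted (map \<pi> [1..<Suc a]) \<and> sorted (map \<pi> [Suc a..<Suc b]) \<and> sorted (map \<pi> [Suc b..<Suc n])"
proof -
  have gaps: "1 \<le> k \<and> k < n \<and> k \<noteq> a \<and> k \<noteq> b \<longleftrightarrow>
      (1 \<le> k \<and> Suc k < Suc a) \<or> (Suc a \<le> k \<and> Suc k < Suc b) \<or> (Suc b \<le> k \<and> Suc k < Suc n)" for k
    using assms by linarith
  have "descent_set n \<pi> \<subseteq> {a, b} \<longleftrightarrow>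
      (\<forall>k. 1 \<le> k \<and> k < n \<and> k \<noteq> a \<and> k \<noteq> b \<longrightarrow> \<pi> k \<le> \<pi> (Suc k))"
    by (auto simp: descent_set_def not_less)
  then show ?thesis
    by (simp only: gaps sorted_map_upt_iff imp_disjL all_conj_distrib imp_conjL)
qed

definition block_word :: "nat \<Rightarrow> nat set \<Rightarrow> nat set \<Rightarrow> nat list" where
  "block_word n A B = sorted_list_of_set A @ sorted_list_of_set B @ sorted_list_of_set ({1..n} - A - B)"

lemma block_word_blocks:
  assumes "a \<le> b" "b \<le> n" "(A, B) \<in> disjoint_subset_pairs {1..n} a (b - a)"
  shows "length (block_word n A B) = n" "distinct (block_word n A B)" "set (block_word n A B) = {1..n}"
    "take a (block_word n A B) = sorted_list_of_set A"
    "drop a (take b (block_word n A B)) = sorted_list_of_set B"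
    "drop b (block_word n A B) = sorted_list_of_set ({1..n} - A - B)"
proof -
  have A: "A \<subseteq> {1..n}" "card A = a" "finite A" and B: "B \<subseteq> {1..n} - A" "card B = b - a" "finite B"
    using assms(3) by (auto simp: disjoint_subset_pairs_def finite_subset)
  have "card ({1..n} - A - B) = n - b"
    using A B assms(1,2) by (simp add: card_Diff_subset Diff_subset_conv)
  then show "length (block_word n A B) = n"
    using A B assms(1,2) by (simp add: block_word_def)
  show "distinct (block_word n A B)" "set (block_word n A B) = {1..n}"
    using A B by (auto simp: block_word_def)
  show "take a (block_word n A B) = sorted_list_of_set A"
    "drop a (take b (block_word n A B)) = sorted_list_of_set B"
    "drop b (block_word n A B) = sorted_list_of_set ({1..n} - A - B)"
    using A B assms(1) by (simp_all add: block_word_def)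
qed

lemma perm_of_block_word:
  assumes "a \<le> b" "b \<le> n" "(A, B) \<in> disjoint_subset_pairs {1..n} a (b - a)"
  shows "perm_of_list (block_word n A B) \<in> perms_descents_in n {a, b}"
    and "perm_of_list (block_word n A B) ` {1..a} = A"
    and "perm_of_list (block_word n A B) ` {Suc a..b} = B"
proof -
  let ?w = "block_word n A B" and ?\<pi> = "perm_of_list (block_word n A B)"
  note w = block_word_blocks[OF assms]
  have A: "finite A" and B: "finite B"
    using assms(3) by (auto simp: disjoint_subset_pairs_def finite_subset)
  have blocks: "map ?\<pi> [Suc i..<Suc j] = drop i (take j ?w)" if "j \<le> n" for i j
    using map_upt_Suc_block[of j n ?\<pi> i] that w(1) map_perm_of_list[of ?w] by simp
  have "sorted (map ?\<pi> [1..<Suc a]) \<and> sorted (map ?\<pi> [Suc a..<Suc b]) \<and> sorted (map ?\<pi> [Suc b..<Suc n])"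
    using blocks[of a 0] blocks[of b a] blocks[of n b] w assms(1,2) by simp
  moreover have "?\<pi> permutes {1..n}"
    using perm_of_list_permutes[of ?w] w by simp
  ultimately show "?\<pi> \<in> perms_descents_in n {a, b}"
    using descent_set_subset_pair_iff[OF assms(1,2)] by (simp add: perms_descents_in_def)
  show "?\<pi> ` {1..a} = A" "?\<pi> ` {Suc a..b} = B"
    using image_perm_of_list[of a ?w 0] image_perm_of_list[of b ?w a] w A B assms(1,2) by simp_all
qed

lemma block_word_of_perm:
  assumes "a \<le> b" "b \<le> n" "\<pi> \<in> perms_descents_in n {a, b}"
  shows "(\<pi> ` {1..a}, \<pi> ` {Suc a..b}) \<in> disjoint_subset_pairs {1..n} a (b - a)"
    and "block_word n (\<pi> ` {1..a}) (\<pi> ` {Suc a..b}) = map \<pi> [1..<Suc n]"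
proof -
  have \<pi>: "\<pi> permutes {1..n}" and sorted:
    "sorted (map \<pi> [1..<Suc a])" "sorted (map \<pi> [Suc a..<Suc b])" "sorted (map \<pi> [Suc b..<Suc n])"
    using assms descent_set_subset_pair_iff[OF assms(1,2)] by (auto simp: perms_descents_in_def)
  have inj: "inj_on \<pi> X" for X
    using permutes_inj_on[OF \<pi>] .
  let ?u = "map \<pi> [1..<Suc a]" and ?v = "map \<pi> [Suc a..<Suc b]" and ?x = "map \<pi> [Suc b..<Suc n]"
  have "[1..<Suc n] = [1..<Suc a] @ [Suc a..<Suc b] @ [Suc b..<Suc n]"
    using assms(1,2) upt_add_eq_append[of 1 "Suc a" "b - a"] upt_add_eq_append[of 1 "Suc b" "n - b"]
    by (simp del: upt_Suc)
  then have w: "map \<pi> [1..<Suc n] = ?u @ ?v @ ?x"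
    by simp
  have "distinct (map \<pi> [1..<Suc n])" "set (map \<pi> [1..<Suc n]) = {1..n}"
    using inj permutes_image[OF \<pi>] by (simp_all del: upt_Suc add: distinct_map atLeastLessThanSuc_atLeastAtMost)
  then have dist: "distinct ?u" "distinct ?v" "distinct ?x" and rest: "set ?x = {1..n} - set ?u - set ?v"
    unfolding w by auto
  have sets: "set ?u = \<pi> ` {1..a}" "set ?v = \<pi> ` {Suc a..b}"
    by (simp_all del: upt_Suc add: atLeastLessThanSuc_atLeastAtMost)
  show "block_word n (\<pi> ` {1..a}) (\<pi> ` {Suc a..b}) = map \<pi> [1..<Suc n]"
    unfolding w block_word_def sets[symmetric] rest[symmetric]
    using sorted dist by (simp only: sorted_list_of_set_set_id)
  show "(\<pi> ` {1..a}, \<pi> ` {Suc a..b}) \<in> disjoint_subset_pairs {1..n} a (b - a)"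
    using permutes_image[OF \<pi>] assms(1,2) inj
    by (auto simp: disjoint_subset_pairs_def card_image image_subset_iff dest: injD[OF permutes_inj[OF \<pi>]])
qed

lemma card_perms_descents_in_pair:
  assumes "a \<le> b" "b \<le> n"
  shows "card (perms_descents_in n {a, b}) = (n choose a) * ((n - a) choose (b - a))"
proof -
  have "bij_betw (\<lambda>\<pi>. (\<pi> ` {1..a}, \<pi> ` {Suc a..b}))
      (perms_descents_in n {a, b}) (disjoint_subset_pairs {1..n} a (b - a))"
  proof (rule bij_betw_byWitness[where f' = "\<lambda>(A, B). perm_of_list (block_word n A B)"])
    show "\<forall>\<pi>\<in>perms_descents_in n {a, b}.
        (case (\<pi> ` {1..a}, \<pi> ` {Suc a..b}) of (A, B) \<Rightarrow> perm_of_list (block_word n A B)) = \<pi>"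
      using block_word_of_perm(2)[OF assms] perm_of_list_map by (auto simp: perms_descents_in_def)
    show "\<forall>y\<in>disjoint_subset_pairs {1..n} a (b - a).
        (\<lambda>\<pi>. (\<pi> ` {1..a}, \<pi> ` {Suc a..b})) ((\<lambda>(A, B). perm_of_list (block_word n A B)) y) = y"
    proof
      fix y assume "y \<in> disjoint_subset_pairs {1..n} a (b - a)"
      moreover obtain A B where "y = (A, B)" by fastforce
      ultimately show "(\<lambda>\<pi>. (\<pi> ` {1..a}, \<pi> ` {Suc a..b})) ((\<lambda>(A, B). perm_of_list (block_word n A B)) y) = y"
        using perm_of_block_word(2,3)[OF assms] by simp
    qed
  qed (use block_word_of_perm(1)[OF assms] perm_of_block_word(1)[OF assms] in auto)
  then show ?thesis
    using bij_betw_same_card card_disjoint_subset_pairs[of "{1..n}" a "b - a"] by fastforce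
qed

lemma descent_count_pair:
  assumes "1 \<le> l" "l < m" "m \<le> n"
  shows "descent_count {l, m} n + (n choose l) + (n choose m) = (n choose m) * (m choose l) + 1"
proof -
  let ?D = "perms_descents_in n"
  define E where "E = {\<pi>. \<pi> permutes {1..n} \<and> descent_set n \<pi> = {l, m}}"
  have fin: "finite (?D S)" for S
    by (rule finite_subset[OF _ finite_permutations[of "{1..n}"]]) (auto simp: perms_descents_in_def)
  have "0 \<notin> descent_set n \<pi>" for \<pi>
    by (simp add: descent_set_def)
  \<comment> \<open>so \<open>?D {0, 0}\<close> consists of the identity alone\<close>
  then have single: "?D {l} \<inter> ?D {m} = ?D {0, 0}"
    using assms(2) by (auto simp: perms_descents_in_def)
  have "S \<subseteq> {l, m} \<longleftrightarrow> S = {l, m} \<or> S \<subseteq> {l} \<or> S \<subseteq> {m}" for S :: "nat set"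
    by auto
  then have split: "?D {l, m} = E \<union> (?D {l} \<union> ?D {m})"
    by (auto simp: perms_descents_in_def E_def)
  have "E \<inter> (?D {l} \<union> ?D {m}) = {}"
    using assms(2) by (auto simp: perms_descents_in_def E_def)
  then have "card (?D {l, m}) = card E + card (?D {l} \<union> ?D {m})"
    unfolding split using fin split by (intro card_Un_disjoint) (auto intro: finite_subset)
  moreover have "card (?D {l} \<union> ?D {m}) + card (?D {0, 0}) = card (?D {l}) + card (?D {m})"
    using card_Un_Int[of "?D {l}" "?D {m}"] fin single by simp
  moreover have "card (?D {l}) = n choose l" "card (?D {m}) = n choose m" "card (?D {0, 0}) = 1"
    "card (?D {l, m}) = (n choose m) * (m choose l)"
    using card_perms_descents_in_pair[of l l n] card_perms_descents_in_pair[of m m n]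
      card_perms_descents_in_pair[of 0 0 n] card_perms_descents_in_pair[of l m n] choose_mult[of l m n] assms
    by simp_all
  ultimately show ?thesis
    by (simp add: descent_count_def E_def)
qed

definition gbinomial_poly :: "nat \<Rightarrow> 'a::field_char_0 poly" where
  "gbinomial_poly k = smult (1 / fact k) (\<Prod>i = 0..<k. [:- of_nat i, 1:])"

lemma poly_gbinomial_poly [simp]: "poly (gbinomial_poly k) a = a gchoose k"
  by (simp add: gbinomial_poly_def poly_prod gbinomial_prod_rev)

lemma descent_poly_eqI:
  assumes "\<And>n. Max (I \<union> {0}) < n \<Longrightarrow> poly p (of_nat n) = of_nat (descent_count I n)"
  shows "descent_poly I = p"
  unfolding descent_poly_def
proof (rule the_equality)
  show "\<forall>n>Max (I \<union> {0}). poly p (of_nat n) = of_nat (descent_count I n)"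
    using assms by blast
next
  fix q :: "complex poly"
  assume q: "\<forall>n>Max (I \<union> {0}). poly q (of_nat n) = of_nat (descent_count I n)"
  let ?N = "Max (I \<union> {0})"
  have "poly (q - p) (of_nat n) = 0" if "?N < n" for n
    using q assms[OF that] that by simp
  then have roots: "of_nat ` {?N<..} \<subseteq> {z. poly (q - p) z = 0}"
    by auto
  have "inj_on (of_nat :: nat \<Rightarrow> complex) {?N<..}"
    by (simp add: inj_on_def)
  then have "infinite (of_nat ` {?N<..} :: complex set)"
    using finite_imageD infinite_Ioi by blast
  then have "q - p = 0"
    using poly_roots_finite[of "q - p"] finite_subset[OF roots] by blast
  then show "q = p"
    by simp
qed

lemma descent_poly_pair:
  assumes "1 \<le> l" "l < m"
  shows "descent_poly {l, m} =
    smult (of_nat (m choose l) - 1) (gbinomial_poly m) - gbinomial_poly l + 1"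
proof (rule descent_poly_eqI)
  fix n assume "Max ({l, m} \<union> {0}) < n"
  then have "m \<le> n"
    by simp
  then have "(of_nat (descent_count {l, m} n) :: complex) + of_nat (n choose l) + of_nat (n choose m)
      = of_nat (n choose m) * of_nat (m choose l) + 1"
    using arg_cong[where f = "of_nat :: nat \<Rightarrow> complex", OF descent_count_pair[OF assms]] by simp
  then show "poly (smult (of_nat (m choose l) - 1) (gbinomial_poly m) - gbinomial_poly l + 1)
      (of_nat n :: complex) = of_nat (descent_count {l, m} n)"
    by (simp add: binomial_gbinomial[symmetric] algebra_simps)
qed

lemma gchoose_eq_prod_ratios: "a gchoose k = (\<Prod>i<k. (a - of_nat i) / of_nat (Suc i))"
  for a :: "'a::field_char_0"
proof -
  have "(\<Prod>i<k. of_nat (Suc i) :: 'a) = fact k"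
    by (simp add: fact_prod_Suc lessThan_atLeast0)
  then show ?thesis
    by (simp add: gbinomial_prod_rev prod_dividef lessThan_atLeast0)
qed

lemma one_less_norm_prod_ratios:
  fixes z :: "'a::real_normed_field"
  assumes "finite S" "S \<noteq> {}" "\<And>i. i \<in> S \<Longrightarrow> real (Suc i) < norm (z - of_nat i)"
  shows "1 < norm (\<Prod>i\<in>S. (z - of_nat i) / of_nat (Suc i))"
proof -
  have "1 < (\<Prod>i\<in>S. norm ((z - of_nat i) / of_nat (Suc i)))"
  proof (rule less_1_prod[OF assms(1,2)])
    fix i assume "i \<in> S"
    then show "1 < norm ((z - of_nat i) / of_nat (Suc i))"
      using assms(3) by (simp add: norm_divide del: of_nat_Suc)
  qed
  then show ?thesis
    by (simp only: prod_norm)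
qed

lemma norm_gchoose_far_from_integers:
  fixes z :: "'a::real_normed_field"
  assumes "1 \<le> l" "l < m" and far: "\<And>i. i < m \<Longrightarrow> real (Suc i) < norm (z - of_nat i)"
  shows "1 < norm (z gchoose l)" and "norm (z gchoose l) < norm (z gchoose m)"
proof -
  let ?R = "\<Prod>i\<in>{l..<m}. (z - of_nat i) / of_nat (Suc i)"
  show X: "1 < norm (z gchoose l)"
    unfolding gchoose_eq_prod_ratios using assms
    by (intro one_less_norm_prod_ratios) (auto simp: lessThan_empty_iff)
  have R: "1 < norm ?R"
    using assms by (intro one_less_norm_prod_ratios) auto
  have ivl: "{..<m} = {..<l} \<union> {l..<m}"
    using assms(2) by auto
  have "z gchoose m = (z gchoose l) * ?R"
    unfolding gchoose_eq_prod_ratios ivl by (subst prod.union_disjoint) auto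
  moreover have "norm (z gchoose l) * 1 < norm (z gchoose l) * norm ?R"
    using R X by (intro mult_strict_left_mono) auto
  ultimately show "norm (z gchoose l) < norm (z gchoose m)"
    by (simp add: norm_mult)
qed

lemma gchoose_pair_root_bound:
  fixes z :: complex
  assumes "1 \<le> l" "l < m"
    and root: "(of_nat (m choose l) - 1) * (z gchoose m) - (z gchoose l) + 1 = 0"
  shows "\<exists>k<m. cmod (z - of_nat k) \<le> real m"
proof (cases "m = 2")
  case True
  then have "l = 1"
    using assms(1,2) by simp
  then have "(z - 1) * (z - 2) = 0"
    using root True by (simp add: gchoose_eq_prod_ratios numeral_2_eq_2 lessThan_Suc field_simps)
  then show ?thesis
    using True by (intro exI[of _ 0]) auto
next
  case False
  then have c: "3 \<le> m choose l"
    using upper_le_binomial[of l m] assms(1,2) by simp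
  show ?thesis
  proof (rule ccontr)
    assume none: "\<not> ?thesis"
    have "real (Suc i) < cmod (z - of_nat i)" if "i < m" for i
    proof -
      have "real m < cmod (z - of_nat i)"
        using none that by (auto simp: not_le)
      moreover have "real (Suc i) \<le> real m"
        using that by simp
      ultimately show ?thesis
        by linarith
    qed
    then have X: "1 < cmod (z gchoose l)" and XY: "cmod (z gchoose l) < cmod (z gchoose m)"
      using norm_gchoose_far_from_integers[OF assms(1,2)] by blast+
    have "(z gchoose l) - 1 = (of_nat (m choose l) - 1) * (z gchoose m)"
      using root by (simp add: algebra_simps eq_neg_iff_add_eq_0 add_eq_0_iff2)
    moreover have "cmod (of_nat (m choose l) - 1) = real (m choose l) - 1"
      using c norm_of_real[of "real (m choose l) - 1"] by simp
    ultimately have "(real (m choose l) - 1) * cmod (z gchoose m) = cmod ((z gchoose l) - 1)"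
      by (simp add: norm_mult)
    also have "\<dots> \<le> cmod (z gchoose l) + 1"
      using norm_triangle_ineq4[of "z gchoose l" 1] by simp
    also have "\<dots> < 2 * cmod (z gchoose m)"
      using X XY by linarith
    also have "\<dots> \<le> (real (m choose l) - 1) * cmod (z gchoose m)"
      using c by (intro mult_right_mono) auto
    finally show False
      by simp
  qed
qed

theorem theorem4p10:
  fixes l m :: nat and z :: complex
  assumes "1 \<le> l" and "l < m"
    and "poly (descent_poly {l, m}) z = 0"
  shows "\<exists>k<m. cmod (z - of_nat k) \<le> real m"
proof (rule gchoose_pair_root_bound[OF assms(1,2)])
  show "(of_nat (m choose l) - 1) * (z gchoose m) - (z gchoose l) + 1 = 0"
    using assms(3) by (simp add: descent_poly_pair[OF assms(1,2)])
qed

end
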